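(* Let $Q$ be a finite Moufang loop whose order is divisible by $3$. If the nucleus of $Q$ is trivial, then $Q$ possesses a proper subloop whose order is divisible by $3$.
   Context: A loop is a magma with identity in which all left and right translations are bijections; it is Moufang if it satisfies $xy\cdot zx=(x\cdot yz)x$. The nucleus of $Q$ is the set of $x\in Q$ with $x(yz)=(xy)z$, $y(xz)=(yx)z$ and $y(zx)=(yz)x$ for all $y,z\in Q$. *)

theory Defs
  imports Main
begin

definition loop :: "'a set \<Rightarrow> ('a \<Rightarrow> 'a \<Rightarrow> 'a) \<Rightarrow> 'a \<Rightarrow> bool" where
  "loop Q mult e \<longleftrightarrow>
     e \<in> Q \<and>
     (\<forall>x\<in>Q. \<forall>y\<in>Q. mult x y \<in> Q) \<and>
     (\<forall>x\<in>Q. mult e x = x \<and> mult x e = x) \<and>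
     (\<forall>x\<in>Q. bij_betw (\<lambda>y. mult x y) Q Q) \<and>
     (\<forall>x\<in>Q. bij_betw (\<lambda>y. mult y x) Q Q)"

definition moufang_loop :: "'a set \<Rightarrow> ('a \<Rightarrow> 'a \<Rightarrow> 'a) \<Rightarrow> 'a \<Rightarrow> bool" where
  "moufang_loop Q mult e \<longleftrightarrow> loop Q mult e \<and>
     (\<forall>x\<in>Q. \<forall>y\<in>Q. \<forall>z\<in>Q.
        mult (mult x y) (mult z x) = mult (mult x (mult y z)) x)"

definition nucleus :: "'a set \<Rightarrow> ('a \<Rightarrow> 'a \<Rightarrow> 'a) \<Rightarrow> 'a set" where
  "nucleus Q mult = {x \<in> Q. \<forall>y\<in>Q. \<forall>z\<in>Q.
       mult x (mult y z) = mult (mult x y) z \<and>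
       mult y (mult x z) = mult (mult y x) z \<and>
       mult y (mult z x) = mult (mult y z) x}"

definition subloop :: "'a set \<Rightarrow> ('a \<Rightarrow> 'a \<Rightarrow> 'a) \<Rightarrow> 'a \<Rightarrow> 'a set \<Rightarrow> bool" where
  "subloop Q mult e H \<longleftrightarrow> H \<subseteq> Q \<and> loop H mult e"

end

theory Submission
  imports Defs
begin

text \<open>In a Moufang loop the map \<open>(a, b) \<mapsto> (b, (a b)\<inverse>)\<close> on \<open>Q \<times> Q\<close> has
  order three, because inverses are antiautomorphic and the inverse properties hold.
  Its fixed points are the pairs \<open>(a, a)\<close> with \<open>a\<^sup>3 = e\<close>, so counting orbits shows that
  the number of solutions of \<open>x\<^sup>3 = e\<close> is congruent to \<open>|Q|\<^sup>2\<close> modulo 3. If 3 divides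
  \<open>|Q|\<close>, there is therefore a solution \<open>a \<noteq> e\<close>, and \<open>{e, a, a\<^sup>2}\<close> is a subloop of
  order 3. It is proper: otherwise \<open>Q\<close> would be the cyclic group of order 3, whose
  nucleus is all of \<open>Q\<close>.\<close>

lemma three_dvd_card_if_fixpoint_free_period_three:
  assumes "finite B" "f ` B \<subseteq> B" "\<forall>x\<in>B. f (f (f x)) = x" "\<forall>x\<in>B. f x \<noteq> x"
  shows "3 dvd card B"
  using assms
proof (induction B rule: finite_psubset_induct)
  case (psubset B)
  show ?case
  proof (cases "B = {}")
    case False
    then obtain x where x: "x \<in> B" by auto
    let ?O = "{x, f x, f (f x)}"
    have period: "f (f (f y)) = y" if "y \<in> B" for y
      using that psubset.prems(2) by blast
    have maps_to: "f y \<in> B" if "y \<in> B" for y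
      using that psubset.prems(1) by blast
    have "x \<noteq> f x" "f x \<noteq> f (f x)"
      using x maps_to[OF x] psubset.prems(3) by auto
    moreover have "x \<noteq> f (f x)"
      using period[OF x] \<open>x \<noteq> f x\<close> by metis
    ultimately have card_O: "card ?O = 3" by auto
    have O_sub: "?O \<subseteq> B" using x maps_to by auto
    have O_orbit: "f ` ?O \<subseteq> ?O" using period[OF x] by auto
    have "f ` (B - ?O) \<subseteq> B - ?O"
    proof
      fix z assume "z \<in> f ` (B - ?O)"
      then obtain y where y: "y \<in> B" "y \<notin> ?O" and z: "z = f y" by auto
      have "f y \<notin> ?O"
      proof
        assume "f y \<in> ?O"
        then have "f (f (f y)) \<in> ?O" using O_orbit by blast
        then show False using y period[of y] by simp
      qed
      then show "z \<in> B - ?O" using maps_to[OF y(1)] z by simp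
    qed
    moreover have "B - ?O \<subset> B" using x by auto
    ultimately have "3 dvd card (B - ?O)"
      by (intro psubset.IH) (use psubset.prems in auto)
    moreover have "card B = card (B - ?O) + 3"
      using card_Diff_subset[OF _ O_sub] card_mono[OF psubset.hyps O_sub] card_O by simp
    ultimately show ?thesis by simp
  qed simp
qed

lemma card_mod_3_eq_card_fixed_points:
  assumes "finite A" "f ` A \<subseteq> A" "\<forall>x\<in>A. f (f (f x)) = x"
  shows "card A mod 3 = card {x\<in>A. f x = x} mod 3"
proof -
  let ?N = "A - {x. f x = x}"
  have "f ` ?N \<subseteq> ?N"
  proof
    fix y assume "y \<in> f ` ?N"
    then obtain x where x: "x \<in> ?N" and y: "y = f x" by auto
    have "f y \<noteq> y"
    proof
      assume "f y = y"
      then have "f (f (f x)) = f x" using y by simp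
      then show False using x assms(3) by auto
    qed
    then show "y \<in> ?N" using x y assms(2) by auto
  qed
  then have "3 dvd card ?N"
    using assms by (intro three_dvd_card_if_fixpoint_free_period_three) auto
  moreover have "card A = card {x\<in>A. f x = x} + card ?N"
    using card_Int_Diff[OF assms(1), of "{x. f x = x}"] by (simp add: Int_def)
  ultimately show ?thesis by presburger
qed

lemma subloop_if_finite_closed:
  assumes "loop Q mult e" "finite H" "H \<subseteq> Q" "e \<in> H"
    and closed: "\<And>x y. x \<in> H \<Longrightarrow> y \<in> H \<Longrightarrow> mult x y \<in> H"
  shows "subloop Q mult e H"
proof -
  have translation_bij: "bij_betw t H H"
    if "inj_on t Q" "\<And>y. y \<in> H \<Longrightarrow> t y \<in> H" for t
  proof -
    have "inj_on t H" using that(1) inj_on_subset assms(3) by blast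
    moreover have "t ` H = H"
      using endo_inj_surj[OF assms(2) _ \<open>inj_on t H\<close>] that(2) by auto
    ultimately show ?thesis unfolding bij_betw_def by simp
  qed
  have "bij_betw (\<lambda>y. mult x y) H H \<and> bij_betw (\<lambda>y. mult y x) H H" if "x \<in> H" for x
  proof -
    have "inj_on (\<lambda>y. mult x y) Q" "inj_on (\<lambda>y. mult y x) Q"
      using assms(1,3) that by (auto simp: loop_def bij_betw_def)
    then show ?thesis
      using translation_bij closed that by simp
  qed
  then show ?thesis
    using assms unfolding subloop_def loop_def by auto
qed

locale moufang =
  fixes Q :: "'a set" and mult :: "'a \<Rightarrow> 'a \<Rightarrow> 'a" (infixl \<open>\<cdot>\<close> 70) and e :: 'a
  assumes moufang_loop: "moufang_loop Q mult e"
begin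

lemma loop: "loop Q mult e"
  using moufang_loop unfolding moufang_loop_def by simp

lemma unit_closed: "e \<in> Q"
  and mult_closed: "x \<in> Q \<Longrightarrow> y \<in> Q \<Longrightarrow> x \<cdot> y \<in> Q"
  and left_unit: "x \<in> Q \<Longrightarrow> e \<cdot> x = x"
  and right_unit: "x \<in> Q \<Longrightarrow> x \<cdot> e = x"
  and left_translation_bij: "x \<in> Q \<Longrightarrow> bij_betw (\<lambda>y. x \<cdot> y) Q Q"
  and right_translation_bij: "x \<in> Q \<Longrightarrow> bij_betw (\<lambda>y. y \<cdot> x) Q Q"
  using loop unfolding loop_def by auto

lemma moufang_identity:
  "x \<in> Q \<Longrightarrow> y \<in> Q \<Longrightarrow> z \<in> Q \<Longrightarrow> x \<cdot> y \<cdot> (z \<cdot> x) = x \<cdot> (y \<cdot> z) \<cdot> x"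
  using moufang_loop unfolding moufang_loop_def by auto

lemma left_cancel: "x \<in> Q \<Longrightarrow> y \<in> Q \<Longrightarrow> z \<in> Q \<Longrightarrow> x \<cdot> y = x \<cdot> z \<Longrightarrow> y = z"
  using left_translation_bij[of x] unfolding bij_betw_def inj_on_def by auto

lemma right_cancel: "x \<in> Q \<Longrightarrow> y \<in> Q \<Longrightarrow> z \<in> Q \<Longrightarrow> y \<cdot> x = z \<cdot> x \<Longrightarrow> y = z"
  using right_translation_bij[of x] unfolding bij_betw_def inj_on_def by auto

lemma flexible: "x \<in> Q \<Longrightarrow> z \<in> Q \<Longrightarrow> x \<cdot> (z \<cdot> x) = x \<cdot> z \<cdot> x"
  using moufang_identity[of x e z] unit_closed by (simp add: left_unit right_unit)

definition loop_inv :: "'a \<Rightarrow> 'a" where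
  "loop_inv x = (SOME y. y \<in> Q \<and> x \<cdot> y = e)"

lemma loop_inv_closed: "x \<in> Q \<Longrightarrow> loop_inv x \<in> Q"
  and right_inverse: "x \<in> Q \<Longrightarrow> x \<cdot> loop_inv x = e"
proof -
  assume "x \<in> Q"
  then have "\<exists>y. y \<in> Q \<and> x \<cdot> y = e"
    using left_translation_bij[of x] unit_closed unfolding bij_betw_def by (metis imageE)
  then have "loop_inv x \<in> Q \<and> x \<cdot> loop_inv x = e"
    unfolding loop_inv_def by (rule someI_ex)
  then show "loop_inv x \<in> Q" "x \<cdot> loop_inv x = e" by auto
qed

lemma left_inverse_property: "x \<in> Q \<Longrightarrow> z \<in> Q \<Longrightarrow> x \<cdot> (loop_inv x \<cdot> z) = z"
proof -
  assume x: "x \<in> Q" and z: "z \<in> Q"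
  have "z \<cdot> x = x \<cdot> (loop_inv x \<cdot> z) \<cdot> x"
    using moufang_identity[OF x loop_inv_closed[OF x] z] right_inverse[OF x] left_unit
      mult_closed x z by simp
  then show ?thesis
    using right_cancel x z mult_closed loop_inv_closed by metis
qed

lemma left_inverse: "x \<in> Q \<Longrightarrow> loop_inv x \<cdot> x = e"
  using left_inverse_property[of x x] right_unit left_cancel mult_closed loop_inv_closed
    unit_closed by metis

lemma loop_inv_unique: "x \<in> Q \<Longrightarrow> y \<in> Q \<Longrightarrow> x \<cdot> y = e \<Longrightarrow> y = loop_inv x"
  using left_cancel right_inverse loop_inv_closed by metis

lemma loop_inv_loop_inv: "x \<in> Q \<Longrightarrow> loop_inv (loop_inv x) = x"
  using loop_inv_unique[of "loop_inv x" x] left_inverse loop_inv_closed by metis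

lemma left_inverse_property': "x \<in> Q \<Longrightarrow> z \<in> Q \<Longrightarrow> loop_inv x \<cdot> (x \<cdot> z) = z"
  using left_inverse_property[of "loop_inv x" z] loop_inv_loop_inv loop_inv_closed by metis

lemma right_inverse_property: "x \<in> Q \<Longrightarrow> y \<in> Q \<Longrightarrow> y \<cdot> loop_inv x \<cdot> x = y"
proof -
  assume x: "x \<in> Q" and y: "y \<in> Q"
  have "x \<cdot> y = x \<cdot> y \<cdot> (loop_inv x \<cdot> x)"
    using left_inverse[OF x] right_unit mult_closed x y by simp
  also have "\<dots> = x \<cdot> (y \<cdot> loop_inv x \<cdot> x)"
    using moufang_identity[OF x y loop_inv_closed[OF x]]
      flexible[of x "y \<cdot> loop_inv x"] x y mult_closed loop_inv_closed by simp
  finally show ?thesis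
    using left_cancel x y mult_closed loop_inv_closed by metis
qed

lemma right_inverse_property': "x \<in> Q \<Longrightarrow> y \<in> Q \<Longrightarrow> y \<cdot> x \<cdot> loop_inv x = y"
  using right_inverse_property[of "loop_inv x" y] loop_inv_loop_inv loop_inv_closed by metis

lemma loop_inv_mult: "a \<in> Q \<Longrightarrow> b \<in> Q \<Longrightarrow> loop_inv (a \<cdot> b) = loop_inv b \<cdot> loop_inv a"
proof -
  assume a: "a \<in> Q" and b: "b \<in> Q"
  have "b \<cdot> loop_inv (a \<cdot> b) = loop_inv a"
    using right_inverse_property'[of "a \<cdot> b" "loop_inv a"] left_inverse_property'[OF a b]
      a b mult_closed loop_inv_closed by simp
  then show ?thesis
    using left_inverse_property'[of b "loop_inv (a \<cdot> b)"] a b mult_closed loop_inv_closed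
    by metis
qed

lemma card_cube_roots_of_unit_mod_3:
  assumes "finite Q"
  shows "card {a\<in>Q. a \<cdot> a \<cdot> a = e} mod 3 = card Q ^ 2 mod 3"
proof -
  define rotate where "rotate p = (snd p, loop_inv (fst p \<cdot> snd p))" for p
  have "rotate ` (Q \<times> Q) \<subseteq> Q \<times> Q"
    unfolding rotate_def using mult_closed loop_inv_closed by auto
  moreover have "rotate (rotate (rotate p)) = p" if "p \<in> Q \<times> Q" for p
  proof -
    obtain a b where p: "p = (a, b)" and a: "a \<in> Q" and b: "b \<in> Q"
      using \<open>p \<in> Q \<times> Q\<close> by auto
    have "b \<cdot> loop_inv (a \<cdot> b) = loop_inv a" "loop_inv (a \<cdot> b) \<cdot> a = loop_inv b"
      using loop_inv_mult a b left_inverse_property right_inverse_property loop_inv_closed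
      by simp_all
    then show ?thesis
      unfolding rotate_def p using loop_inv_loop_inv a b by simp
  qed
  moreover have "{p\<in>Q \<times> Q. rotate p = p} = (\<lambda>a. (a, a)) ` {a\<in>Q. a \<cdot> a \<cdot> a = e}"
    unfolding rotate_def
    using loop_inv_unique right_inverse mult_closed by (fastforce simp: image_iff)
  moreover have "card ((\<lambda>a. (a, a)) ` {a\<in>Q. a \<cdot> a \<cdot> a = e}) = card {a\<in>Q. a \<cdot> a \<cdot> a = e}"
    by (rule card_image) (auto simp: inj_on_def)
  ultimately show ?thesis
    using card_mod_3_eq_card_fixed_points[of "Q \<times> Q" rotate] assms
    by (simp add: card_cartesian_product power2_eq_square)
qed

lemma cube_root_of_unit_products:
  assumes "a \<in> Q" "a \<cdot> a \<cdot> a = e"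
  shows "a \<cdot> (a \<cdot> a) = e" and "a \<cdot> a \<cdot> (a \<cdot> a) = a"
proof -
  show "a \<cdot> (a \<cdot> a) = e" using flexible assms by simp
  then have "a \<cdot> a = loop_inv a"
    using loop_inv_unique assms mult_closed by simp
  then show "a \<cdot> a \<cdot> (a \<cdot> a) = a"
    using left_inverse_property' assms by metis
qed

lemma cyclic_subloop_of_order_3:
  assumes "a \<in> Q" "a \<noteq> e" "a \<cdot> a \<cdot> a = e"
  shows "subloop Q mult e {e, a, a \<cdot> a}" and "card {e, a, a \<cdot> a} = 3"
proof -
  note products = cube_root_of_unit_products[OF assms(1,3)]
  show "subloop Q mult e {e, a, a \<cdot> a}"
    using assms products unit_closed mult_closed left_unit right_unit
    by (intro subloop_if_finite_closed[OF loop]) auto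
  have "a \<cdot> a \<noteq> e" using assms left_unit by force
  moreover have "a \<cdot> a \<noteq> a" using assms right_unit left_cancel unit_closed by metis
  ultimately show "card {e, a, a \<cdot> a} = 3" using assms(2) by auto
qed

lemma nucleus_cyclic_of_order_3:
  assumes "Q = {e, a, a \<cdot> a}" "a \<cdot> a \<cdot> a = e"
  shows "nucleus Q mult = Q"
proof -
  have a: "a \<in> Q" and aa: "a \<cdot> a \<in> Q" using assms(1) by simp_all
  have units: "e \<cdot> x = x" "x \<cdot> e = x" if "x \<in> Q" for x
    using that left_unit right_unit by auto
  have "{e, a, a \<cdot> a} \<subseteq> nucleus {e, a, a \<cdot> a} mult"
    unfolding nucleus_def
    using cube_root_of_unit_products[OF a assms(2)] assms(2)
      units[OF a] units[OF aa] units[OF unit_closed]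
    by simp
  then show ?thesis
    unfolding assms(1) nucleus_def by blast
qed

end

theorem proposition6p4:
  fixes Q :: "'a set" and mult :: "'a \<Rightarrow> 'a \<Rightarrow> 'a" and e :: 'a
  assumes "moufang_loop Q mult e"
    and "finite Q"
    and "3 dvd card Q"
    and "nucleus Q mult = {e}"
  shows "\<exists>H. subloop Q mult e H \<and> H \<noteq> Q \<and> 3 dvd card H"
proof -
  interpret moufang Q mult e by (rule moufang.intro) fact
  let ?R = "{a\<in>Q. mult (mult a a) a = e}"
  have "3 dvd card ?R"
    using card_cube_roots_of_unit_mod_3 assms(2,3)
    by (auto simp: mod_eq_0_iff_dvd power2_eq_square)
  then have "?R \<noteq> {e}" by auto
  moreover have "e \<in> ?R" using unit_closed left_unit by simp
  ultimately obtain a where "a \<in> Q" "a \<noteq> e" "mult (mult a a) a = e" by blast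
  note subloop = cyclic_subloop_of_order_3[OF this]
  have "{e, a, mult a a} \<noteq> Q"
    using nucleus_cyclic_of_order_3[of a] assms(4) \<open>a \<noteq> e\<close> \<open>mult (mult a a) a = e\<close> by auto
  with subloop show ?thesis by auto
qed

end
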